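(* A frame $L$ is subfit if and only if every exact filter of $L$ is regular, i.e. $\mathsf{Ex}(L)\subseteq\mathsf R(L)$.
   Context: A frame is a complete lattice $L$ with $(\bigvee A)\wedge b=\bigvee_{a\in A}(a\wedge b)$. $L$ is subfit if for all $a,b$: whenever ($\forall c$, $a\vee c=1\Rightarrow b\vee c=1$) then $a\le b$. A filter is a nonempty up-closed subset closed under finite meets. A meet $\bigwedge M$ is exact if $(\bigwedge M)\vee b=\bigwedge_{a\in M}(a\vee b)$ for all $b$; an exact filter contains every exact meet of its subsets; $\mathsf{Ex}(L)$ is the set of exact filters. A filter is regular if it is of the form $\{x\in L\mid\forall b\in G,\ b\vee x=1\}$ for some filter $G$; $\mathsf R(L)$ is the set of regular filters. *)

theory Defs
  imports Main
begin

class frame = complete_lattice +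
  assumes frame_distrib: "inf (Sup A) b = Sup ((\<lambda>a. inf a b) ` A)"

definition subfit :: "'a::frame itself \<Rightarrow> bool" where
  "subfit _ \<longleftrightarrow> (\<forall>a b::'a. (\<forall>c. sup a c = top \<longrightarrow> sup b c = top) \<longrightarrow> a \<le> b)"

definition lfilter :: "'a::frame set \<Rightarrow> bool" where
  "lfilter F \<longleftrightarrow> F \<noteq> {} \<and> (\<forall>x y. x \<in> F \<longrightarrow> x \<le> y \<longrightarrow> y \<in> F)
                 \<and> (\<forall>x y. x \<in> F \<longrightarrow> y \<in> F \<longrightarrow> inf x y \<in> F)"

definition exact_meet :: "'a::frame set \<Rightarrow> bool" where
  "exact_meet M \<longleftrightarrow> (\<forall>b. sup (Inf M) b = Inf ((\<lambda>a. sup a b) ` M))"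

definition exact_filter :: "'a::frame set \<Rightarrow> bool" where
  "exact_filter F \<longleftrightarrow> lfilter F \<and> (\<forall>M. M \<subseteq> F \<longrightarrow> exact_meet M \<longrightarrow> Inf M \<in> F)"

definition Ex_filters :: "'a::frame set set" where
  "Ex_filters = {F. exact_filter F}"

definition regular_filter :: "'a::frame set \<Rightarrow> bool" where
  "regular_filter F \<longleftrightarrow> lfilter F \<and>
     (\<exists>G. lfilter G \<and> F = {x. \<forall>b\<in>G. sup b x = top})"

definition R_filters :: "'a::frame set set" where
  "R_filters = {F. regular_filter F}"

end

theory Submission
  imports Defs
begin

text \<open>
  For a filter \<open>F\<close> let \<open>F\<^sup>* = {c. \<forall>y\<in>F. y \<squnion> c = \<top>}\<close>. Regular filters are exactly
  the filters with \<open>F = F\<^sup>*\<^sup>*\<close>, and \<open>F \<subseteq> F\<^sup>*\<^sup>*\<close> always holds. If \<open>L\<close> is subfit and \<open>F\<close> is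
  exact, an element \<open>x \<in> F\<^sup>*\<^sup>*\<close> is the meet of \<open>M = {y \<squnion> x | y \<in> F} \<subseteq> F\<close>: subfitness
  gives \<open>\<Sqinter>{m \<squnion> b | m \<in> M} \<le> x \<squnion> b\<close> for every \<open>b\<close>, which makes this meet exact, so
  \<open>x \<in> F\<close>. Conversely, principal filters \<open>\<up>a\<close> are exact, and regularity of \<open>\<up>a\<close> is
  precisely the subfitness condition for \<open>a\<close>.
\<close>

subclass (in frame) distrib_lattice
proof
  fix x y z :: 'a
  have "inf (sup y z) x = sup (inf y x) (inf z x)" for x y z :: 'a
    using frame_distrib[of "{y, z}" x] by simp
  then show "sup x (inf y z) = inf (sup x y) (sup x z)"
    by (metis inf_commute inf_sup_absorb sup_assoc sup_commute sup_inf_absorb)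
qed

definition sup_complement :: "'a::frame set \<Rightarrow> 'a set" where
  "sup_complement F = {c. \<forall>y\<in>F. sup y c = top}"

lemma lfilter_sup_complement: "lfilter (sup_complement F)"
  unfolding lfilter_def sup_complement_def
proof (intro conjI allI impI)
  show "{c. \<forall>y\<in>F. sup y c = top} \<noteq> {}" using sup_top_right by blast
next
  fix x y assume "x \<in> {c. \<forall>y\<in>F. sup y c = top}" and "x \<le> y"
  then show "y \<in> {c. \<forall>y\<in>F. sup y c = top}"
    by (auto simp: top_unique) (metis sup_mono order_refl top_unique)
qed (auto simp: sup_inf_distrib1)

lemma subset_sup_complement_sup_complement: "F \<subseteq> sup_complement (sup_complement F)"
  by (auto simp: sup_complement_def sup_commute)

lemma regular_filter_iff_sup_complement:
  "regular_filter F \<longleftrightarrow> (\<exists>G. lfilter G \<and> F = sup_complement G)"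
  using lfilter_sup_complement by (auto simp: regular_filter_def sup_complement_def)

lemma exact_meet_eqI:
  fixes M :: "'a::frame set"
  assumes lower: "\<And>a. a \<in> M \<Longrightarrow> x \<le> a"
    and bound: "\<And>b. Inf ((\<lambda>a. sup a b) ` M) \<le> sup x b"
  shows "Inf M = x" and "exact_meet M"
proof -
  show Inf_M: "Inf M = x"
    using bound[of bot] lower by (simp add: order.antisym Inf_greatest)
  have "sup (Inf M) b = Inf ((\<lambda>a. sup a b) ` M)" for b
  proof (rule order.antisym)
    show "sup (Inf M) b \<le> Inf ((\<lambda>a. sup a b) ` M)"
      by (rule INF_greatest, rule sup_mono, auto intro: Inf_lower)
    show "Inf ((\<lambda>a. sup a b) ` M) \<le> sup (Inf M) b"
      using bound Inf_M by simp
  qed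
  then show "exact_meet M" by (simp add: exact_meet_def)
qed

lemma subfit_INF_sup_le:
  fixes F :: "'a::frame set"
  assumes subfit: "subfit TYPE('a)"
    and x: "x \<in> sup_complement (sup_complement F)"
  shows "Inf ((\<lambda>y. sup (sup y x) b) ` F) \<le> sup x b"
proof -
  let ?t = "Inf ((\<lambda>y. sup (sup y x) b) ` F)"
  have "sup (sup x b) c = top" if tc: "sup ?t c = top" for c
  proof -
    have "sup x (sup b c) \<in> sup_complement F"
      unfolding sup_complement_def
    proof (intro CollectI ballI)
      fix y assume "y \<in> F"
      then have "?t \<le> sup (sup y x) b" by (auto intro: INF_lower)
      then have "sup ?t c \<le> sup y (sup x (sup b c))"
        by (metis sup_mono order_refl sup_assoc)
      then show "sup y (sup x (sup b c)) = top" using tc by (simp add: top_unique)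
    qed
    then have "sup (sup x (sup b c)) x = top"
      using x by (simp add: sup_complement_def)
    then show ?thesis by (metis sup_assoc sup_commute sup_left_idem)
  qed
  then show ?thesis using subfit unfolding subfit_def by blast
qed

lemma subfit_exact_filter_regular:
  fixes F :: "'a::frame set"
  assumes subfit: "subfit TYPE('a)" and exact: "exact_filter F"
  shows "regular_filter F"
proof -
  have up: "\<And>x y. x \<in> F \<Longrightarrow> x \<le> y \<Longrightarrow> y \<in> F"
    using exact by (simp add: exact_filter_def lfilter_def)
  have "x \<in> F" if x: "x \<in> sup_complement (sup_complement F)" for x
  proof -
    let ?M = "(\<lambda>y. sup y x) ` F"
    have lower: "\<And>a. a \<in> ?M \<Longrightarrow> x \<le> a" by auto
    have bound: "\<And>b. Inf ((\<lambda>a. sup a b) ` ?M) \<le> sup x b"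
      using subfit_INF_sup_le[OF subfit x] by (simp add: image_image)
    note exact_meet_eqI[OF lower bound]
    moreover have "?M \<subseteq> F" using up by auto
    ultimately show "x \<in> F" using exact by (metis exact_filter_def)
  qed
  then have "F = sup_complement (sup_complement F)"
    using subset_sup_complement_sup_complement by blast
  then show ?thesis
    using lfilter_sup_complement regular_filter_iff_sup_complement by blast
qed

lemma exact_filter_principal: "exact_filter {x::'a::frame. a \<le> x}"
  by (auto simp: exact_filter_def lfilter_def intro: Inf_greatest)

lemma regular_principal_filter_le:
  fixes a b :: "'a::frame"
  assumes regular: "regular_filter {x. a \<le> x}"
    and ab: "\<forall>c. sup a c = top \<longrightarrow> sup b c = top"
  shows "a \<le> b"
proof -
  obtain G where G: "{x. a \<le> x} = sup_complement G"
    using regular regular_filter_iff_sup_complement by blast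
  have "a \<in> sup_complement G" using G by blast
  then have "b \<in> sup_complement G"
    using ab by (simp add: sup_complement_def sup_commute)
  then show ?thesis using G by blast
qed

theorem mainTheorem10:
  shows "subfit TYPE('a::frame) \<longleftrightarrow> (Ex_filters :: 'a set set) \<subseteq> R_filters"
proof
  assume "subfit TYPE('a::frame)"
  then show "(Ex_filters :: 'a set set) \<subseteq> R_filters"
    using subfit_exact_filter_regular by (auto simp: Ex_filters_def R_filters_def)
next
  assume "(Ex_filters :: 'a set set) \<subseteq> R_filters"
  then have "regular_filter {x::'a. a \<le> x}" for a
    using exact_filter_principal by (auto simp: Ex_filters_def R_filters_def)
  then show "subfit TYPE('a::frame)"
    using regular_principal_filter_le unfolding subfit_def by blast
qed

end
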